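(* Let $K\le P$ be positive integers, $\theta=(K,P)$, and suppose $p(\theta)>0$. Then for every $n\ge3$, $$\frac{\mathbb{E}[T_n(\theta)]}{\mathbb{E}[T_n(p(\theta))]}=\frac{C_{\rm K}(\theta)}{p(\theta)}=1+\frac{q(\theta)^2-r(\theta)}{(1-q(\theta))^3}\,q(\theta)\ \ge 1,$$ with equality if and only if $P<2K$; moreover, if $2K\le P<3K$ this ratio equals $1+\big(q(\theta)/(1-q(\theta))\big)^3$.
   Context: Random key graph: each of $n$ nodes receives independently a uniformly random $K$-element subset of $\{1,\dots,P\}$, distinct nodes being adjacent iff their subsets intersect; $T_n(\theta)$ is its number of triangles. $q(\theta)=\binom{P-K}{K}/\binom{P}{K}$ if $2K\le P$ and $0$ otherwise; $p(\theta)=1-q(\theta)$ (the edge probability); $r(\theta)=\binom{P-2K}{K}/\binom{P}{K}$ if $3K\le P$ and $0$ otherwise; $\beta(\theta)=(1-q)^3+q^3-qr$; $C_{\rm K}(\theta)=\beta(\theta)/(1-q(\theta))^2$. $T_n(p)$ is the number of triangles of the Erdős–Rényi graph $\mathbb{G}(n;p)$ (edges independent with probability $p$), whose clustering coefficient is $C_{\rm ER}(p)=p$. *)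

theory Defs
  imports "HOL-Probability.Probability"
begin

definition q_rkg :: "nat \<Rightarrow> nat \<Rightarrow> real" where
  "q_rkg K P = (if 2 * K \<le> P then real ((P - K) choose K) / real (P choose K) else 0)"

definition p_rkg :: "nat \<Rightarrow> nat \<Rightarrow> real" where
  "p_rkg K P = 1 - q_rkg K P"

definition r_rkg :: "nat \<Rightarrow> nat \<Rightarrow> real" where
  "r_rkg K P = (if 3 * K \<le> P then real ((P - 2 * K) choose K) / real (P choose K) else 0)"

definition beta_rkg :: "nat \<Rightarrow> nat \<Rightarrow> real" where
  "beta_rkg K P = (1 - q_rkg K P) ^ 3 + q_rkg K P ^ 3 - q_rkg K P * r_rkg K P"

definition CK_rkg :: "nat \<Rightarrow> nat \<Rightarrow> real" where
  "CK_rkg K P = beta_rkg K P / (1 - q_rkg K P) ^ 2"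

definition triangles :: "nat \<Rightarrow> (nat \<Rightarrow> nat \<Rightarrow> bool) \<Rightarrow> nat" where
  "triangles n adj = card {T. T \<subseteq> {0..<n} \<and> card T = 3 \<and>
                          (\<forall>x\<in>T. \<forall>y\<in>T. x \<noteq> y \<longrightarrow> adj x y)}"

definition key_pmf :: "nat \<Rightarrow> nat \<Rightarrow> nat \<Rightarrow> (nat \<Rightarrow> nat set) pmf" where
  "key_pmf n K P = Pi_pmf {0..<n} {} (\<lambda>_. pmf_of_set {S. S \<subseteq> {1..P} \<and> card S = K})"

definition rkg_adj :: "(nat \<Rightarrow> nat set) \<Rightarrow> nat \<Rightarrow> nat \<Rightarrow> bool" where
  "rkg_adj f i j \<longleftrightarrow> i \<noteq> j \<and> f i \<inter> f j \<noteq> {}"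

definition ET_rkg :: "nat \<Rightarrow> nat \<Rightarrow> nat \<Rightarrow> real" where
  "ET_rkg n K P = measure_pmf.expectation (key_pmf n K P) (\<lambda>f. real (triangles n (rkg_adj f)))"

definition er_pmf :: "nat \<Rightarrow> real \<Rightarrow> (nat set \<Rightarrow> bool) pmf" where
  "er_pmf n p = Pi_pmf {e. e \<subseteq> {0..<n} \<and> card e = 2} False (\<lambda>_. bernoulli_pmf p)"

definition er_adj :: "(nat set \<Rightarrow> bool) \<Rightarrow> nat \<Rightarrow> nat \<Rightarrow> bool" where
  "er_adj g i j \<longleftrightarrow> i \<noteq> j \<and> g {i, j}"

definition ET_er :: "nat \<Rightarrow> real \<Rightarrow> real" where
  "ET_er n p = measure_pmf.expectation (er_pmf n p) (\<lambda>g. real (triangles n (er_adj g)))"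

end

theory Submission
  imports Defs
begin

text \<open>
  In both graphs the expected number of triangles is \<open>n choose 3\<close> times the probability that
  three fixed nodes span a triangle. In \<open>G(n;p)\<close> the three edges are independent, which gives
  \<open>p^3\<close>. In the key graph the three keys are independent and uniform; a key misses a given key
  with probability \<open>q\<close> and misses two disjoint keys with probability \<open>r\<close>, so inclusion--exclusion
  over the three events ``this pair of keys is disjoint'' gives \<open>1 - 3q + 3q^2 - qr = \<beta>\<close>.
  The ratio is therefore \<open>\<beta>/(1-q)^3 = 1 + q(q^2-r)/(1-q)^3\<close>, and for \<open>2K \<le> P\<close> the strict
  inequality \<open>r < q^2\<close> is the log-concavity
  \<open>(m-K choose K) (m+K choose K) < (m choose K)^2\<close> of binomial coefficients at \<open>m = P - K\<close>.
\<close>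

definition k_subsets :: "nat \<Rightarrow> 'a set \<Rightarrow> 'a set set" where
  "k_subsets k A = {S. S \<subseteq> A \<and> card S = k}"

lemma finite_k_subsets: "finite A \<Longrightarrow> finite (k_subsets k A)"
  unfolding k_subsets_def by (rule finite_subset[of _ "Pow A"]) auto

lemma card_k_subsets: "finite A \<Longrightarrow> card (k_subsets k A) = card A choose k"
  unfolding k_subsets_def by (rule n_subsets)

lemma k_subsets_nonempty: "finite A \<Longrightarrow> k \<le> card A \<Longrightarrow> k_subsets k A \<noteq> {}"
  using card_k_subsets[of A k] by (auto simp: binomial_eq_0_iff)

lemma card_k_subsets_disjoint:
  assumes "finite A" "B \<subseteq> A"
  shows "card {S \<in> k_subsets k A. B \<inter> S = {}} = (card A - card B) choose k"
proof -
  have "{S \<in> k_subsets k A. B \<inter> S = {}} = k_subsets k (A - B)"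
    unfolding k_subsets_def by auto
  then show ?thesis
    using assms by (simp add: card_k_subsets card_Diff_subset finite_subset)
qed

lemma three_subset_cases:
  assumes "T \<in> k_subsets 3 {0..<n}"
  obtains a b c where "T = {a, b, c}" "a \<noteq> b" "a \<noteq> c" "b \<noteq> c" "a < n" "b < n" "c < n"
  using assms unfolding k_subsets_def by (auto simp: card_3_iff)

lemma sum_triple_products_one_minus:
  fixes d :: "'a \<Rightarrow> 'a \<Rightarrow> real"
  assumes sym: "\<And>x y. d x y = d y x"
    and row: "\<And>x. x \<in> U \<Longrightarrow> (\<Sum>y\<in>U. d x y) = m"
    and common: "\<And>x y. x \<in> U \<Longrightarrow> y \<in> U \<Longrightarrow> d x y * (\<Sum>z\<in>U. d x z * d y z) = d x y * r"
  defines "N \<equiv> real (card U)"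
  shows "(\<Sum>x\<in>U. \<Sum>y\<in>U. \<Sum>z\<in>U. (1 - d x y) * (1 - d x z) * (1 - d y z))
       = N ^ 3 - 3 * N ^ 2 * m + 3 * N * m ^ 2 - N * m * r"
proof -
  have col: "(\<Sum>x\<in>U. d x y) = m" if "y \<in> U" for y
    using row[OF that] by (simp add: sym)
  have "(\<Sum>x\<in>U. \<Sum>y\<in>U. \<Sum>z\<in>U. 1) = N ^ 3"
    by (simp add: N_def power3_eq_cube)
  moreover have "(\<Sum>x\<in>U. \<Sum>y\<in>U. \<Sum>z\<in>U. d x y) = N ^ 2 * m"
    and "(\<Sum>x\<in>U. \<Sum>y\<in>U. \<Sum>z\<in>U. d x z) = N ^ 2 * m"
    and "(\<Sum>x\<in>U. \<Sum>y\<in>U. \<Sum>z\<in>U. d y z) = N ^ 2 * m"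
    using row by (simp_all add: N_def power2_eq_square sum_distrib_left[symmetric] mult.commute)
  moreover have "(\<Sum>x\<in>U. \<Sum>y\<in>U. \<Sum>z\<in>U. d x y * d x z) = N * m ^ 2"
    using row by (simp add: N_def power2_eq_square sum_product[symmetric])
  moreover have "(\<Sum>x\<in>U. \<Sum>y\<in>U. \<Sum>z\<in>U. d x y * d y z) = N * m ^ 2"
    using row by (simp add: N_def power2_eq_square sum_distrib_left[symmetric] sum_distrib_right[symmetric])
  moreover have "(\<Sum>x\<in>U. \<Sum>y\<in>U. \<Sum>z\<in>U. d x z * d y z) = N * m ^ 2"
  proof -
    have "(\<Sum>x\<in>U. \<Sum>y\<in>U. \<Sum>z\<in>U. d x z * d y z) = (\<Sum>x\<in>U. \<Sum>z\<in>U. \<Sum>y\<in>U. d x z * d y z)"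
      by (intro sum.cong refl sum.swap)
    also have "\<dots> = (\<Sum>z\<in>U. \<Sum>x\<in>U. \<Sum>y\<in>U. d x z * d y z)"
      by (rule sum.swap)
    finally show ?thesis
      using col by (simp add: N_def power2_eq_square sum_product[symmetric])
  qed
  moreover have "(\<Sum>x\<in>U. \<Sum>y\<in>U. \<Sum>z\<in>U. d x y * d x z * d y z) = N * m * r"
  proof -
    have "(\<Sum>x\<in>U. \<Sum>y\<in>U. \<Sum>z\<in>U. d x y * d x z * d y z)
        = (\<Sum>x\<in>U. \<Sum>y\<in>U. d x y * (\<Sum>z\<in>U. d x z * d y z))"
      by (simp add: mult.assoc sum_distrib_left)
    also have "\<dots> = (\<Sum>x\<in>U. \<Sum>y\<in>U. d x y * r)"
      using common by (intro sum.cong refl) simp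
    finally show ?thesis
      using row by (simp add: N_def sum_distrib_right[symmetric])
  qed
  moreover have "(1 - d x y) * (1 - d x z) * (1 - d y z) =
     1 - d x y - d x z - d y z + d x y * d x z + d x y * d y z + d x z * d y z
     - d x y * d x z * d y z" for x y z
    by (simp add: algebra_simps)
  ultimately have "(\<Sum>x\<in>U. \<Sum>y\<in>U. \<Sum>z\<in>U. (1 - d x y) * (1 - d x z) * (1 - d y z))
      = N ^ 3 - N ^ 2 * m - N ^ 2 * m - N ^ 2 * m + N * m ^ 2 + N * m ^ 2 + N * m ^ 2 - N * m * r"
    by (simp only: sum.distrib sum_subtractf)
  then show ?thesis
    by (simp add: algebra_simps)
qed

lemma sum_pairwise_meeting_triples:
  fixes U :: "'a set set"
  assumes fin: "finite U"
    and deg: "\<And>x. x \<in> U \<Longrightarrow> card {y \<in> U. x \<inter> y = {}} = m"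
    and codeg: "\<And>x y. x \<in> U \<Longrightarrow> y \<in> U \<Longrightarrow> x \<inter> y = {} \<Longrightarrow>
                  card {z \<in> U. x \<inter> z = {} \<and> y \<inter> z = {}} = r"
  shows "(\<Sum>x\<in>U. \<Sum>y\<in>U. \<Sum>z\<in>U. of_bool (x \<inter> y \<noteq> {} \<and> x \<inter> z \<noteq> {} \<and> y \<inter> z \<noteq> {}) :: real)
       = real (card U) ^ 3 - 3 * real (card U) ^ 2 * real m + 3 * real (card U) * real m ^ 2
         - real (card U) * real m * real r"
proof -
  define d where "d x y = (of_bool (x \<inter> y = {}) :: real)" for x y :: "'a set"
  have "of_bool (x \<inter> y \<noteq> {} \<and> x \<inter> z \<noteq> {} \<and> y \<inter> z \<noteq> {}) = (1 - d x y) * (1 - d x z) * (1 - d y z)"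
    for x y z
    by (simp add: d_def)
  moreover have "(\<Sum>y\<in>U. d x y) = m" if "x \<in> U" for x
    using deg[OF that] fin by (simp add: d_def sum.If_cases Int_def)
  \<comment> \<open>the common non-neighbour count is only needed when \<open>x\<close> and \<open>y\<close> are disjoint\<close>
  moreover have "d x y * (\<Sum>z\<in>U. d x z * d y z) = d x y * r" if "x \<in> U" "y \<in> U" for x y
    using codeg[OF that] fin
    by (cases "x \<inter> y = {}") (simp_all add: d_def sum.If_cases Int_def[of U] flip: of_bool_conj)
  ultimately show ?thesis
    using sum_triple_products_one_minus[of d U m r] by (simp add: d_def Int_commute)
qed

lemma pair_pmf_of_set:
  assumes "finite A" "A \<noteq> {}" "finite B" "B \<noteq> {}"
  shows "pair_pmf (pmf_of_set A) (pmf_of_set B) = pmf_of_set (A \<times> B)"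
proof (rule pmf_eqI)
  fix ab :: "'a \<times> 'b"
  show "pmf (pair_pmf (pmf_of_set A) (pmf_of_set B)) ab = pmf (pmf_of_set (A \<times> B)) ab"
    using assms by (cases ab) (simp add: pmf_pair card_cartesian_product indicator_def)
qed

lemma expectation_uniform_triple:
  fixes \<Phi> :: "'a \<Rightarrow> 'a \<Rightarrow> 'a \<Rightarrow> real"
  assumes "finite U" "U \<noteq> {}"
  defines "\<mu> \<equiv> pmf_of_set U"
  shows "measure_pmf.expectation (pair_pmf \<mu> (pair_pmf \<mu> \<mu>)) (\<lambda>(x, y, z). \<Phi> x y z)
       = (\<Sum>x\<in>U. \<Sum>y\<in>U. \<Sum>z\<in>U. \<Phi> x y z) / real (card U) ^ 3"
  using assms
  by (simp add: pair_pmf_of_set integral_pmf_of_set card_cartesian_product power3_eq_cube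
                sum.cartesian_product)

lemma map_pmf_Pi_pmf_insert:
  assumes "finite B" "x \<notin> B" "\<And>f y. g (f(x := y)) = g f"
  shows "map_pmf (\<lambda>f. (f x, g f)) (Pi_pmf (insert x B) d p) = pair_pmf (p x) (map_pmf g (Pi_pmf B d p))"
proof -
  have "map_pmf (\<lambda>f. (f x, g f)) (Pi_pmf (insert x B) d p) =
        map_pmf (\<lambda>(y, f). (id y, g f)) (pair_pmf (p x) (Pi_pmf B d p))"
    using assms by (simp add: Pi_pmf_insert pmf.map_comp o_def case_prod_unfold)
  then show ?thesis
    unfolding map_pair by (simp add: pmf.map_ident)
qed

lemma map_pmf_Pi_pmf_three:
  assumes "finite A" "a \<in> A" "b \<in> A" "c \<in> A" "a \<noteq> b" "a \<noteq> c" "b \<noteq> c"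
  shows "map_pmf (\<lambda>f. (f a, f b, f c)) (Pi_pmf A d p) = pair_pmf (p a) (pair_pmf (p b) (p c))"
proof -
  have A: "A = insert a (A - {a})" and B: "A - {a} = insert b (A - {a} - {b})"
    using assms by auto
  have "map_pmf (\<lambda>f. (f a, f b, f c)) (Pi_pmf A d p)
      = pair_pmf (p a) (map_pmf (\<lambda>f. (f b, f c)) (Pi_pmf (A - {a}) d p))"
    using assms by (subst A, intro map_pmf_Pi_pmf_insert) auto
  also have "map_pmf (\<lambda>f. (f b, f c)) (Pi_pmf (A - {a}) d p)
      = pair_pmf (p b) (map_pmf (\<lambda>f. f c) (Pi_pmf (A - {a} - {b}) d p))"
    using assms by (subst B, intro map_pmf_Pi_pmf_insert) auto
  also have "map_pmf (\<lambda>f. f c) (Pi_pmf (A - {a} - {b}) d p) = p c"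
    using assms by (simp add: Pi_pmf_component)
  finally show ?thesis .
qed

lemma real_triangles_eq_sum:
  "real (triangles n adj)
     = (\<Sum>T\<in>k_subsets 3 {0..<n}. of_bool (\<forall>x\<in>T. \<forall>y\<in>T. x \<noteq> y \<longrightarrow> adj x y))"
proof -
  have "{T. T \<subseteq> {0..<n} \<and> card T = 3 \<and> (\<forall>x\<in>T. \<forall>y\<in>T. x \<noteq> y \<longrightarrow> adj x y)}
      = k_subsets 3 {0..<n} \<inter> {T. \<forall>x\<in>T. \<forall>y\<in>T. x \<noteq> y \<longrightarrow> adj x y}"
    unfolding k_subsets_def by auto
  then show ?thesis
    using finite_k_subsets[of "{0..<n}" 3] by (simp add: triangles_def)
qed

lemma expectation_triangles:
  fixes M :: "'a pmf"
  assumes "finite (set_pmf M)"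
    and "\<And>T. T \<in> k_subsets 3 {0..<n} \<Longrightarrow>
           measure_pmf.expectation M (\<lambda>\<omega>. of_bool (\<forall>x\<in>T. \<forall>y\<in>T. x \<noteq> y \<longrightarrow> adj \<omega> x y)) = c"
  shows "measure_pmf.expectation M (\<lambda>\<omega>. real (triangles n (adj \<omega>))) = real (n choose 3) * c"
proof -
  have "measure_pmf.expectation M (\<lambda>\<omega>. real (triangles n (adj \<omega>)))
      = (\<Sum>T\<in>k_subsets 3 {0..<n}.
           measure_pmf.expectation M (\<lambda>\<omega>. of_bool (\<forall>x\<in>T. \<forall>y\<in>T. x \<noteq> y \<longrightarrow> adj \<omega> x y)))"
    unfolding real_triangles_eq_sum
    by (rule Bochner_Integration.integral_sum) (rule integrable_measure_pmf_finite[OF assms(1)])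
  then show ?thesis
    using assms(2) by (simp add: card_k_subsets)
qed

lemma real_binomial_eq_prod: "real (a choose k) = (\<Prod>i<k. real a - real i) / fact k"
  by (simp add: binomial_gbinomial gbinomial_prod_rev atLeast0LessThan)

lemma binomial_shifted_product_less_square:
  fixes m k :: nat
  assumes "0 < k" "2 * k \<le> m"
  shows "real ((m - k) choose k) * real ((m + k) choose k) < real (m choose k) ^ 2"
proof -
  have factor: "(real m - k - i) * (real m + k - i) = (real m - i) ^ 2 - real k ^ 2" for i :: real
    by (simp add: power2_eq_square algebra_simps)
  have "(\<Prod>i<k. (real m - k - i) * (real m + k - i)) < (\<Prod>i<k. (real m - i) ^ 2)"
  proof (rule prod_mono_strict[of 0])
    fix i assume "i \<in> {..<k}"
    with assms show "0 \<le> (real m - k - i) * (real m + k - i)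
        \<and> (real m - k - i) * (real m + k - i) \<le> (real m - i) ^ 2"
      by (intro conjI mult_nonneg_nonneg) (simp_all add: factor)
    show "0 < (real m - i) ^ 2"
      using \<open>i \<in> {..<k}\<close> assms by simp
  qed (use assms factor[of 0] in simp_all)
  then have "(\<Prod>i<k. real m - k - i) * (\<Prod>i<k. real m + k - i) < (\<Prod>i<k. real m - i) ^ 2"
    by (simp add: prod.distrib power2_eq_square)
  then show ?thesis
    using assms unfolding real_binomial_eq_prod
    by (simp add: of_nat_diff power_divide power2_eq_square divide_strict_right_mono)
qed

text \<open>The case distinctions in the definitions of \<open>q\<close> and \<open>r\<close> are redundant: the binomial
  coefficient in the numerator already vanishes outside the stated range.\<close>

lemma q_rkg_eq: "q_rkg K P = real ((P - K) choose K) / real (P choose K)"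
  by (auto simp: q_rkg_def)

lemma r_rkg_eq: "r_rkg K P = real ((P - 2 * K) choose K) / real (P choose K)"
  by (auto simp: r_rkg_def)

lemma q_rkg_pos: "2 * K \<le> P \<Longrightarrow> 0 < q_rkg K P"
  by (simp add: q_rkg_eq)

lemma r_rkg_less_q_rkg_sq:
  assumes "0 < K" "2 * K \<le> P"
  shows "r_rkg K P < q_rkg K P ^ 2"
proof (cases "3 * K \<le> P")
  case True
  have "real ((P - 2 * K) choose K) * real (P choose K) < real ((P - K) choose K) ^ 2"
    using binomial_shifted_product_less_square[of K "P - K"] assms True
    by (simp add: numeral_2_eq_2 mult.commute)
  moreover have "real (P choose K) > 0"
    using assms by simp
  ultimately show ?thesis
    by (simp add: q_rkg_eq r_rkg_eq power_divide field_simps power2_eq_square)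
next
  case False
  then show ?thesis
    using assms by (simp add: r_rkg_def q_rkg_eq)
qed

lemma CK_rkg_over_p_rkg:
  assumes "q_rkg K P \<noteq> 1"
  shows "CK_rkg K P / p_rkg K P = beta_rkg K P / (1 - q_rkg K P) ^ 3"
    and "CK_rkg K P / p_rkg K P
           = 1 + (q_rkg K P ^ 2 - r_rkg K P) / (1 - q_rkg K P) ^ 3 * q_rkg K P"
proof -
  show ratio: "CK_rkg K P / p_rkg K P = beta_rkg K P / (1 - q_rkg K P) ^ 3"
    by (simp add: CK_rkg_def p_rkg_def power2_eq_square power3_eq_cube)
  have "beta_rkg K P = (1 - q_rkg K P) ^ 3 + (q_rkg K P ^ 2 - r_rkg K P) * q_rkg K P"
    by (simp add: beta_rkg_def power2_eq_square power3_eq_cube algebra_simps)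
  moreover have "(1 - q_rkg K P) ^ 3 \<noteq> 0"
    using assms by simp
  ultimately show "CK_rkg K P / p_rkg K P
           = 1 + (q_rkg K P ^ 2 - r_rkg K P) / (1 - q_rkg K P) ^ 3 * q_rkg K P"
    unfolding ratio by (simp add: field_simps)
qed

lemma scaled_beta_rkg:
  fixes K P :: nat
  defines "N \<equiv> real (P choose K)" and "M \<equiv> real ((P - K) choose K)"
    and "R \<equiv> real ((P - 2 * K) choose K)"
  shows "N ^ 3 * beta_rkg K P = N ^ 3 - 3 * N ^ 2 * M + 3 * N * M ^ 2 - N * M * R"
proof (cases "N = 0")
  case True
  then have "M = 0" "R = 0"
    by (simp_all add: N_def M_def R_def)
  with True show ?thesis by simp
next
  case False
  then show ?thesis
    unfolding beta_rkg_def q_rkg_eq r_rkg_eq N_def[symmetric] M_def[symmetric] R_def[symmetric]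
    by (simp add: field_simps power2_eq_square power3_eq_cube)
qed

lemma key_pmf_eq: "key_pmf n K P = Pi_pmf {0..<n} {} (\<lambda>_. pmf_of_set (k_subsets K {1..P}))"
  by (simp add: key_pmf_def k_subsets_def)

lemma sum_pairwise_meeting_k_subsets:
  fixes K P :: nat
  defines "U \<equiv> k_subsets K {1..P}"
  shows "(\<Sum>x\<in>U. \<Sum>y\<in>U. \<Sum>z\<in>U. of_bool (x \<inter> y \<noteq> {} \<and> x \<inter> z \<noteq> {} \<and> y \<inter> z \<noteq> {}) :: real)
       = real (P choose K) ^ 3 * beta_rkg K P"
proof -
  have sub: "x \<subseteq> {1..P}" "card x = K" if "x \<in> U" for x
    using that by (auto simp: U_def k_subsets_def)
  have deg: "card {y \<in> U. x \<inter> y = {}} = (P - K) choose K" if "x \<in> U" for x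
    using card_k_subsets_disjoint[of "{1..P}" x K] sub[OF that] by (simp add: U_def)
  have codeg: "card {z \<in> U. x \<inter> z = {} \<and> y \<inter> z = {}} = (P - 2 * K) choose K"
    if "x \<in> U" "y \<in> U" "x \<inter> y = {}" for x y
  proof -
    have "card (x \<union> y) = 2 * K"
      using sub[OF that(1)] sub[OF that(2)] that(3)
      by (simp add: card_Un_disjoint finite_subset)
    moreover have "{z \<in> U. x \<inter> z = {} \<and> y \<inter> z = {}} = {z \<in> U. (x \<union> y) \<inter> z = {}}"
      by auto
    ultimately show ?thesis
      using card_k_subsets_disjoint[of "{1..P}" "x \<union> y" K] sub[OF that(1)] sub[OF that(2)]
      by (simp add: U_def)
  qed
  have card_U: "card U = P choose K"
    by (simp add: U_def card_k_subsets)
  have "(\<Sum>x\<in>U. \<Sum>y\<in>U. \<Sum>z\<in>U.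
      of_bool (x \<inter> y \<noteq> {} \<and> x \<inter> z \<noteq> {} \<and> y \<inter> z \<noteq> {}))
      = real (P choose K) ^ 3 - 3 * real (P choose K) ^ 2 * real ((P - K) choose K)
        + 3 * real (P choose K) * real ((P - K) choose K) ^ 2
        - real (P choose K) * real ((P - K) choose K) * real ((P - 2 * K) choose K)"
    unfolding card_U[symmetric]
    by (rule sum_pairwise_meeting_triples[OF _ deg codeg]) (simp add: U_def finite_k_subsets)
  then show ?thesis
    by (simp add: scaled_beta_rkg)
qed

lemma expectation_key_triangle:
  assumes "K \<le> P" "T \<in> k_subsets 3 {0..<n}"
  shows "measure_pmf.expectation (key_pmf n K P)
           (\<lambda>f. of_bool (\<forall>x\<in>T. \<forall>y\<in>T. x \<noteq> y \<longrightarrow> rkg_adj f x y)) = beta_rkg K P"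
proof -
  define U where "U = k_subsets K {1..P}"
  define \<Phi> where "\<Phi> x y z = (of_bool (x \<inter> y \<noteq> {} \<and> x \<inter> z \<noteq> {} \<and> y \<inter> z \<noteq> {}) :: real)"
    for x y z :: "nat set"
  have U: "finite U" "card U = P choose K" "U \<noteq> {}"
    using assms(1) by (simp_all add: U_def finite_k_subsets card_k_subsets k_subsets_nonempty)
  obtain a b c where abc: "T = {a, b, c}" "a \<noteq> b" "a \<noteq> c" "b \<noteq> c" "a < n" "b < n" "c < n"
    using three_subset_cases[OF assms(2)] .
  have "of_bool (\<forall>x\<in>T. \<forall>y\<in>T. x \<noteq> y \<longrightarrow> rkg_adj f x y) = \<Phi> (f a) (f b) (f c)" for f
    using abc by (auto simp: \<Phi>_def rkg_adj_def Int_commute)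
  then have "measure_pmf.expectation (key_pmf n K P)
               (\<lambda>f. of_bool (\<forall>x\<in>T. \<forall>y\<in>T. x \<noteq> y \<longrightarrow> rkg_adj f x y))
      = measure_pmf.expectation (map_pmf (\<lambda>f. (f a, f b, f c)) (key_pmf n K P)) (\<lambda>(x, y, z). \<Phi> x y z)"
    by simp
  also have "map_pmf (\<lambda>f. (f a, f b, f c)) (key_pmf n K P)
      = pair_pmf (pmf_of_set U) (pair_pmf (pmf_of_set U) (pmf_of_set U))"
    unfolding key_pmf_eq U_def using abc by (intro map_pmf_Pi_pmf_three) auto
  also have "measure_pmf.expectation \<dots> (\<lambda>(x, y, z). \<Phi> x y z)
      = (\<Sum>x\<in>U. \<Sum>y\<in>U. \<Sum>z\<in>U. \<Phi> x y z) / real (P choose K) ^ 3"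
    unfolding U(2)[symmetric] by (rule expectation_uniform_triple[OF U(1,3)])
  also have "\<dots> = beta_rkg K P"
    unfolding \<Phi>_def U_def sum_pairwise_meeting_k_subsets using assms(1) by simp
  finally show ?thesis .
qed

lemma ET_rkg_eq: "K \<le> P \<Longrightarrow> ET_rkg n K P = real (n choose 3) * beta_rkg K P"
  unfolding ET_rkg_def
  by (intro expectation_triangles expectation_key_triangle)
     (auto simp: key_pmf_eq set_Pi_pmf finite_k_subsets k_subsets_nonempty intro!: finite_PiE_dflt)

lemma expectation_er_triangle:
  assumes "0 \<le> p" "p \<le> 1" "T \<in> k_subsets 3 {0..<n}"
  shows "measure_pmf.expectation (er_pmf n p)
           (\<lambda>g. of_bool (\<forall>x\<in>T. \<forall>y\<in>T. x \<noteq> y \<longrightarrow> er_adj g x y)) = p ^ 3"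
proof -
  obtain a b c where abc: "T = {a, b, c}" "a \<noteq> b" "a \<noteq> c" "b \<noteq> c" "a < n" "b < n" "c < n"
    using three_subset_cases[OF assms(3)] .
  define E where "E = k_subsets 2 {0..<n}"
  define D :: "nat set set" where "D = {{a, b}, {a, c}, {b, c}}"
  have E: "finite E" "D \<subseteq> E"
    using abc by (simp_all add: E_def D_def k_subsets_def finite_k_subsets[unfolded k_subsets_def])
  have D: "card D = 3"
    using abc by (simp add: D_def doubleton_eq_iff)
  have edges: "(of_bool (\<forall>x\<in>T. \<forall>y\<in>T. x \<noteq> y \<longrightarrow> er_adj g x y) :: real)
      = (\<Prod>e\<in>E. if e \<in> D then of_bool (g e) else 1)" for g
  proof -
    have "(\<Prod>e\<in>E. if e \<in> D then of_bool (g e) else 1) = (\<Prod>e\<in>D. of_bool (g e) :: real)"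
      using E by (simp add: prod.If_cases Int_absorb1)
    also have "\<dots> = of_bool (g {a, b} \<and> g {a, c} \<and> g {b, c})"
      using abc by (simp add: D_def doubleton_eq_iff)
    finally show ?thesis
      using abc by (auto simp: er_adj_def insert_commute)
  qed
  have "measure_pmf.expectation (er_pmf n p)
          (\<lambda>g. of_bool (\<forall>x\<in>T. \<forall>y\<in>T. x \<noteq> y \<longrightarrow> er_adj g x y))
      = (\<Prod>e\<in>E. measure_pmf.expectation (bernoulli_pmf p) (\<lambda>v. if e \<in> D then of_bool v else 1 :: real))"
    unfolding er_pmf_def k_subsets_def[symmetric] E_def[symmetric] edges
    by (rule expectation_prod_Pi_pmf) (auto simp: E intro!: integrable_measure_pmf_finite)
  also have "\<dots> = (\<Prod>e\<in>E. if e \<in> D then p else 1)"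
    using assms by (intro prod.cong refl) simp
  finally show ?thesis
    using E D by (simp add: prod.If_cases Int_absorb1)
qed

lemma ET_er_eq: "0 \<le> p \<Longrightarrow> p \<le> 1 \<Longrightarrow> ET_er n p = real (n choose 3) * p ^ 3"
  unfolding ET_er_def
  by (intro expectation_triangles expectation_er_triangle)
     (auto simp: er_pmf_def set_Pi_pmf finite_k_subsets[unfolded k_subsets_def] intro!: finite_PiE_dflt)

theorem mainTheorem16:
  fixes K P n :: nat
  assumes "0 < K" "K \<le> P" "p_rkg K P > 0" "n \<ge> 3"
  shows "ET_rkg n K P / ET_er n (p_rkg K P) = CK_rkg K P / p_rkg K P
       \<and> CK_rkg K P / p_rkg K P
           = 1 + (q_rkg K P ^ 2 - r_rkg K P) / (1 - q_rkg K P) ^ 3 * q_rkg K P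
       \<and> CK_rkg K P / p_rkg K P \<ge> 1
       \<and> (CK_rkg K P / p_rkg K P = 1 \<longleftrightarrow> P < 2 * K)
       \<and> (2 * K \<le> P \<and> P < 3 * K \<longrightarrow>
            ET_rkg n K P / ET_er n (p_rkg K P) = 1 + (q_rkg K P / (1 - q_rkg K P)) ^ 3)"
proof -
  define q r where "q = q_rkg K P" and "r = r_rkg K P"
  have q: "0 \<le> q" "q < 1"
    using assms(3) by (simp_all add: q_def q_rkg_eq p_rkg_def)
  have ratio: "ET_rkg n K P / ET_er n (p_rkg K P) = CK_rkg K P / p_rkg K P"
    using assms(2,4) q CK_rkg_over_p_rkg(1)[of K P]
    by (simp add: ET_rkg_eq ET_er_eq p_rkg_def q_def)
  have CK: "CK_rkg K P / p_rkg K P = 1 + (q ^ 2 - r) / (1 - q) ^ 3 * q"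
    using CK_rkg_over_p_rkg(2)[of K P] q by (simp add: q_def r_def)
  define E where "E = (q ^ 2 - r) / (1 - q) ^ 3 * q"
  have E_pos: "0 < E" if "2 * K \<le> P"
    using r_rkg_less_q_rkg_sq[OF assms(1) that] q_rkg_pos[OF that] q by (simp add: E_def q_def r_def)
  have E_zero: "E = 0" if "P < 2 * K"
    using that by (simp add: E_def q_def q_rkg_def)
  have E_cube: "E = (q / (1 - q)) ^ 3" if "P < 3 * K"
    using that by (simp add: E_def r_def r_rkg_def power_divide power2_eq_square power3_eq_cube)
  show ?thesis
    unfolding ratio CK q_def[symmetric] r_def[symmetric] E_def[symmetric]
    using E_pos E_zero E_cube by (cases "2 * K \<le> P") auto
qed

end
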